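(* Let $n$ and $0<n_1<\cdots<n_d<n$ be integers with $m_1=n_1$, $m_k=n_k-n_{k-1}$ ($2\le k\le d$), $m_{d+1}=n-n_d$, and regard $\mathrm{Flag}(n_1,\dots,n_d;n)=\{(VJ_1V^{\mathsf T},\dots,VJ_dV^{\mathsf T}):V\in\mathrm{O}(n)\}$ as a submanifold of $(\mathbb{R}^{n\times n})^d$ with the Frobenius inner product. Let $V(t)$ be a differentiable curve in $\mathrm{O}(n)$ with $\Lambda(t)=V(t)^{\mathsf T}\dot V(t)$ satisfying $\Lambda(k,k)\equiv0$ ($k=1,\dots,d+1$), $c(t)=V(t)(J_1,\dots,J_d)V(t)^{\mathsf T}$, and let $X(t)\in\mathfrak{so}(n)$ be differentiable with $X(k,k)\equiv0$ ($k=1,\dots,d+1$). Let \[ T_2(t)=V(t)\big(\Lambda XJ_1+J_1X\Lambda,\dots,\Lambda XJ_d+J_dX\Lambda\big)V(t)^{\mathsf T}. \] Then the orthogonal projection of $T_2(t)$ onto $\mathbb{T}_{c(t)}\mathrm{Flag}(n_1,\dots,n_d;n)$ equals $V(t)(W_1(t),\dots,W_d(t))V(t)^{\mathsf T}$, where $W_1,\dots,W_d$ are symmetric with blocks \[ W_k(p,q)=\begin{cases}\sum_{s=1}^{d+1}X(k,s)\Lambda(s,q)-\sum_{s=1}^{d+1}\Lambda(s,k)^{\mathsf T}X(q,s)^{\mathsf T}, & p=k,\ q\neq k,\\[2pt] \sum_{s=1}^{d+1}\Lambda(s,p)^{\mathsf T}X(k,s)^{\mathsf T}-\sum_{s=1}^{d+1}X(p,s)\Lambda(s,k),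 & q=k,\ p\neq k,\\[2pt] 0, & \text{otherwise}.\end{cases} \]
   Context: $J_k=\operatorname{diag}(-I_{m_1},\dots,-I_{m_{k-1}},I_{m_k},-I_{m_{k+1}},\dots,-I_{m_{d+1}})$. $V(X_1,\dots,X_d)V^{\mathsf T}$ denotes $(VX_1V^{\mathsf T},\dots,VX_dV^{\mathsf T})$. For an $n\times n$ matrix $M$, $M(p,q)$ denotes its $(p,q)$ block in the partition $n=m_1+\cdots+m_{d+1}$. *)

theory Defs
  imports "HOL-Analysis.Analysis"
begin

text \<open>Matrices are n x n real matrices indexed by a finite linearly ordered type 'n,
  n = CARD('n).
  The partition n = m_1 + ... + m_{d+1} is given by 0 < ns 1 < ... < ns d < n.
  Block numbers run over {1..d+1}. Tuples in (R^{n x n})^d are functions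
  nat => matrix, with components 1..d and value 0 elsewhere.\<close>

definition pos :: "('n::{finite,linorder}) \<Rightarrow> nat" where
  "pos i = card {j. j < i}"

definition blk :: "nat \<Rightarrow> (nat \<Rightarrow> nat) \<Rightarrow> ('n::{finite,linorder}) \<Rightarrow> nat" where
  "blk d ns i = card {k \<in> {1..d}. ns k \<le> pos i} + 1"

definition blockpart :: "nat \<Rightarrow> (nat \<Rightarrow> nat) \<Rightarrow> real^('n::{finite,linorder})^('n::{finite,linorder}) \<Rightarrow> nat \<Rightarrow> nat \<Rightarrow> real^('n::{finite,linorder})^('n::{finite,linorder})" where
  "blockpart d ns M p q = (\<chi> i j. if blk d ns i = p \<and> blk d ns j = q then M $ i $ j else 0)"

definition Jmat :: "nat \<Rightarrow> (nat \<Rightarrow> nat) \<Rightarrow> nat \<Rightarrow> real^('n::{finite,linorder})^'n::{finite,linorder}" where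
  "Jmat d ns k = (\<chi> i j. if i = j then (if blk d ns i = k then 1 else -1) else 0)"

definition flag :: "nat \<Rightarrow> (nat \<Rightarrow> nat) \<Rightarrow> (nat \<Rightarrow> real^('n::{finite,linorder})^'n::{finite,linorder}) set" where
  "flag d ns = {c. \<exists>V. orthogonal_matrix V \<and>
      c = (\<lambda>k. if k \<in> {1..d} then V ** Jmat d ns k ** transpose V else 0)}"

definition tangent_space :: "(nat \<Rightarrow> real^('n::{finite,linorder})^('n::{finite,linorder})) set \<Rightarrow> (nat \<Rightarrow> real^('n::{finite,linorder})^('n::{finite,linorder})) \<Rightarrow> (nat \<Rightarrow> real^('n::{finite,linorder})^('n::{finite,linorder})) set" where
  "tangent_space S c = {T. \<exists>\<gamma>::real \<Rightarrow> nat \<Rightarrow> real^('n::{finite,linorder})^('n::{finite,linorder}). (\<forall>t. \<gamma> t \<in> S) \<and> \<gamma> 0 = c \<and>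
      (\<forall>k. ((\<lambda>t. \<gamma> t k) has_vector_derivative T k) (at 0))}"

definition tinner :: "nat \<Rightarrow> (nat \<Rightarrow> real^('n::{finite,linorder})^('n::{finite,linorder})) \<Rightarrow> (nat \<Rightarrow> real^('n::{finite,linorder})^('n::{finite,linorder})) \<Rightarrow> real" where
  "tinner d A B = (\<Sum>k\<in>{1..d}. inner (A k) (B k))"

definition orth_proj :: "nat \<Rightarrow> (nat \<Rightarrow> real^('n::{finite,linorder})^('n::{finite,linorder})) set \<Rightarrow> (nat \<Rightarrow> real^('n::{finite,linorder})^('n::{finite,linorder})) \<Rightarrow> (nat \<Rightarrow> real^('n::{finite,linorder})^('n::{finite,linorder}))" where
  "orth_proj d S x = (THE p. p \<in> S \<and> (\<forall>s\<in>S. tinner d (\<lambda>k. x k - p k) s = 0))"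

definition Wmat :: "nat \<Rightarrow> (nat \<Rightarrow> nat) \<Rightarrow> real^('n::{finite,linorder})^('n::{finite,linorder}) \<Rightarrow> real^('n::{finite,linorder})^('n::{finite,linorder}) \<Rightarrow> nat \<Rightarrow> real^('n::{finite,linorder})^('n::{finite,linorder})" where
  "Wmat d ns X L k =
     (\<Sum>q\<in>{1..d+1}-{k}. \<Sum>s\<in>{1..d+1}.
        blockpart d ns X k s ** blockpart d ns L s q
        - transpose (blockpart d ns L s k) ** transpose (blockpart d ns X q s))
   + (\<Sum>p\<in>{1..d+1}-{k}. \<Sum>s\<in>{1..d+1}.
        transpose (blockpart d ns L s p) ** transpose (blockpart d ns X k s)
        - blockpart d ns X p s ** blockpart d ns L s k)"

end

theory Submission
  imports Defs
begin

(* Write J for J_k and c = V (J_1, ..., J_d) V^T.  Since c_k c_k = I on the whole flag manifold,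
   differentiating shows that every tangent vector at c anticommutes with c_k; conversely, for
   skew Omega the Cayley curve R(s) through I with velocity Omega gives the tangent vector
   V (Omega J_k - J_k Omega) V^T.  For a symmetric involution C, matrices commuting with C are
   Frobenius-orthogonal to matrices anticommuting with C.  Now split
     Lambda X J + J X Lambda = 1/2 (J S + S J) + (Omega J - J Omega),
   S = Lambda X + X Lambda, Omega = 1/2 (Lambda X - X Lambda):
   the first summand commutes with J, so after conjugation by V it is normal to the flag, and the
   second is tangent.  Hence the projection is V (Omega J_k - J_k Omega) V^T, and for skew X and
   Lambda this commutator has exactly the blocks W_k(p,q) of the statement. *)

section \<open>Matrix calculus\<close>

lemma matrix_add_rdistrib: "((A::real^'n^'m) + B) ** (C::real^'k^'n) = A ** C + B ** C"
  by (vector matrix_matrix_mult_def sum.distrib[symmetric] field_simps)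

lemma matrix_diff_ldistrib: "(A::real^'n^'m) ** ((B::real^'k^'n) - C) = A ** B - A ** C"
  by (vector matrix_matrix_mult_def sum_subtractf[symmetric] field_simps)

lemma matrix_diff_rdistrib: "((A::real^'n^'m) - B) ** (C::real^'k^'n) = A ** C - B ** C"
  by (vector matrix_matrix_mult_def sum_subtractf[symmetric] field_simps)

lemma matrix_uminus_mult: "(- (A::real^'n^'m)) ** (B::real^'k^'n) = - (A ** B)"
  by (vector matrix_matrix_mult_def sum_negf[symmetric])

lemma matrix_mult_uminus: "(A::real^'n^'m) ** (- (B::real^'k^'n)) = - (A ** B)"
  by (vector matrix_matrix_mult_def sum_negf[symmetric])

lemma transpose_add: "transpose ((A::real^'n^'m) + B) = transpose A + transpose B"
  by (vector transpose_def)

lemma transpose_diff: "transpose ((A::real^'n^'m) - B) = transpose A - transpose B"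
  by (vector transpose_def)

lemma transpose_uminus: "transpose (- (A::real^'n^'m)) = - transpose A"
  by (vector transpose_def)

lemmas matrix_ring_simps = matrix_add_ldistrib matrix_add_rdistrib matrix_diff_ldistrib
  matrix_diff_rdistrib matrix_uminus_mult matrix_mult_uminus matrix_mul_assoc
  transpose_add transpose_diff transpose_uminus matrix_transpose_mul transpose_scalar
  scalar_matrix_assoc[symmetric] matrix_scalar_ac

lemma bounded_bilinear_matrix_mult: "bounded_bilinear (\<lambda>(A::real^'n^'m) (B::real^'k^'n). A ** B)"
  unfolding bilinear_conv_bounded_bilinear[symmetric] bilinear_def
  by (auto intro!: linearI simp: matrix_add_ldistrib matrix_add_rdistrib matrix_scalar_ac scalar_matrix_assoc)

lemma bounded_linear_transpose: "bounded_linear (transpose :: real^'n^'m \<Rightarrow> real^'m^'n)"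
  unfolding linear_conv_bounded_linear[symmetric]
  by (auto intro!: linearI simp: transpose_add transpose_scalar)

lemma has_vector_derivative_congruence:
  fixes U :: "real \<Rightarrow> real^'n^'m" and M :: "real^'n^'n"
  assumes "(U has_vector_derivative U') (at x)"
  shows "((\<lambda>s. U s ** M ** transpose (U s)) has_vector_derivative
           U x ** M ** transpose U' + U' ** M ** transpose (U x)) (at x)"
proof -
  have "((\<lambda>s. U s ** M) has_vector_derivative U' ** M) (at x)"
    using bounded_bilinear.has_vector_derivative[OF bounded_bilinear_matrix_mult assms
        has_vector_derivative_const] by simp
  moreover have "((\<lambda>s. transpose (U s)) has_vector_derivative transpose U') (at x)"
    by (rule bounded_linear.has_vector_derivative[OF bounded_linear_transpose assms])
  ultimately show ?thesis
    by (rule bounded_bilinear.has_vector_derivative[OF bounded_bilinear_matrix_mult])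
qed

lemma has_vector_derivative_at_if_quotient_tendsto:
  fixes f g :: "real \<Rightarrow> 'a::real_normed_vector"
  assumes quotient: "\<And>y. f y - f x = (y - x) *\<^sub>R g y" and lim: "(g \<longlongrightarrow> D) (at x)"
  shows "(f has_vector_derivative D) (at x)"
  unfolding has_vector_derivative_def has_derivative_iff_norm
proof (intro conjI bounded_linear_scaleR_left)
  have "((\<lambda>y. norm (g y - D)) \<longlongrightarrow> 0) (at x)"
    using lim by (simp add: tendsto_norm_zero LIM_zero)
  moreover have "\<forall>\<^sub>F y in at x. norm (g y - D) = norm (f y - f x - (y - x) *\<^sub>R D) / norm (y - x)"
    using eventually_neq_at_within[of x x UNIV]
    by eventually_elim (simp add: quotient scaleR_right_diff_distrib[symmetric])
  ultimately show "((\<lambda>y. norm (f y - f x - (y - x) *\<^sub>R D) / norm (y - x)) \<longlongrightarrow> 0) (at x)"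
    by (rule Lim_transform_eventually)
qed

lemma inner_matrix: "inner (A::real^'n^'m) B = (\<Sum>i\<in>UNIV. \<Sum>j\<in>UNIV. A$i$j * B$i$j)"
  by (simp add: inner_vec_def)

lemma inner_transpose: "inner (transpose (A::real^'n^'m)) (transpose B) = inner A B"
  unfolding inner_matrix transpose_def by (simp, rule sum.swap)

lemma inner_matrix_mult_right: "inner ((A::real^'n^'m) ** (B::real^'k^'n)) C = inner A (C ** transpose B)"
  unfolding inner_matrix matrix_matrix_mult_def transpose_def
  by (simp add: sum_distrib_left sum_distrib_right mult_ac, rule sum.cong[OF refl], rule sum.swap)

lemma inner_matrix_mult_left: "inner ((A::real^'n^'m) ** (B::real^'k^'n)) C = inner B (transpose A ** C)"
proof -
  have "inner (A ** B) C = inner (transpose B ** transpose A) (transpose C)"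
    by (metis inner_transpose matrix_transpose_mul)
  also have "\<dots> = inner (transpose B) (transpose C ** A)"
    by (simp add: inner_matrix_mult_right)
  also have "\<dots> = inner B (transpose A ** C)"
    by (metis inner_transpose matrix_transpose_mul transpose_transpose)
  finally show ?thesis .
qed

lemma inner_commuting_anticommuting_eq_0:
  fixes E A C :: "real^'n^'n"
  assumes "E ** C = C ** E" "C ** A = - (A ** C)" "C ** C = mat 1" "transpose C = C"
  shows "inner E A = 0"
proof -
  have "inner E A = inner E (A ** C ** C)"
    using assms(3) by (simp add: matrix_mul_assoc[symmetric])
  also have "\<dots> = inner (E ** C) (A ** C)"
    using assms(4) by (simp add: inner_matrix_mult_right)
  also have "\<dots> = inner (C ** E) (- (C ** A))"
    using assms(1,2) by simp
  also have "\<dots> = - inner E (C ** C ** A)"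
    using assms(4) by (simp add: inner_matrix_mult_left matrix_mul_assoc)
  also have "\<dots> = - inner E A"
    using assms(3) by simp
  finally show ?thesis by simp
qed

lemma norm_orthogonal_matrix:
  "orthogonal_matrix (Q::real^'n^'n) \<Longrightarrow> norm Q = norm (mat 1 :: real^'n^'n)"
proof -
  assume "orthogonal_matrix Q"
  then have "inner Q Q = inner (mat 1 :: real^'n^'n) (mat 1)"
    using inner_matrix_mult_left[of Q "mat 1" Q] by (simp add: orthogonal_matrix)
  then show ?thesis by (simp add: norm_eq_sqrt_inner)
qed

lemma anticommutator_commutator_split:
  fixes A B J :: "real^'n^'n"
  shows "A ** J + J ** B = (1/2) *\<^sub>R (J ** (A + B) + (A + B) ** J)
           + ((1/2) *\<^sub>R (A - B) ** J - J ** ((1/2) *\<^sub>R (A - B)))"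
proof -
  have split: "((1/2) *\<^sub>R S + \<Omega>) ** J + J ** ((1/2) *\<^sub>R S - \<Omega>)
      = (1/2) *\<^sub>R (J ** S + S ** J) + (\<Omega> ** J - J ** \<Omega>)" for S \<Omega> :: "real^'n^'n"
    by (simp add: matrix_ring_simps algebra_simps)
  have "A = (1/2) *\<^sub>R (A + B) + (1/2) *\<^sub>R (A - B)" "B = (1/2) *\<^sub>R (A + B) - (1/2) *\<^sub>R (A - B)"
    by (simp_all add: vec_eq_iff algebra_simps)
  then show ?thesis
    using split[of "A + B" "(1/2) *\<^sub>R (A - B)"] by metis
qed

lemma anticommutator_commute:
  fixes S J :: "real^'n^'n"
  assumes "J ** J = mat 1"
  shows "(J ** S + S ** J) ** J = J ** (J ** S + S ** J)"
proof -
  have "(J ** S + S ** J) ** J = J ** S ** J + S ** (J ** J)"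
    by (simp add: matrix_add_rdistrib matrix_mul_assoc)
  also have "\<dots> = J ** (J ** S + S ** J)"
    using assms by (simp add: matrix_add_ldistrib matrix_mul_assoc add.commute)
  finally show ?thesis .
qed

lemma transpose_commutator_skew_symmetric:
  fixes \<Omega> J :: "real^'n^'n"
  assumes "transpose \<Omega> = - \<Omega>" "transpose J = J"
  shows "transpose (\<Omega> ** J - J ** \<Omega>) = \<Omega> ** J - J ** \<Omega>"
  using assms by (simp add: matrix_ring_simps)

section \<open>Skew matrices and the Cayley transform\<close>

lemma matrix_vector_mult_uminus_left: "(- (A::real^'n^'m)) *v x = - (A *v x)"
  by (simp add: vec_eq_iff matrix_vector_mult_def sum_negf)

lemma inner_skew_matrix_vector_eq_0:
  fixes A :: "real^'n^'n"
  assumes "transpose A = - A"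
  shows "x \<bullet> (A *v x) = 0"
proof -
  have "x \<bullet> (A *v x) = (transpose A *v x) \<bullet> x"
    using dot_lmul_matrix[of x A x] by (simp add: inner_commute)
  also have "\<dots> = - (x \<bullet> (A *v x))"
    using assms by (simp add: matrix_vector_mult_uminus_left inner_commute)
  finally show ?thesis by simp
qed

lemma invertible_id_minus_skew:
  fixes A :: "real^'n^'n"
  assumes "transpose A = - A"
  shows "invertible (mat 1 - A)"
proof -
  have "x = 0" if "(mat 1 - A) *v x = 0" for x
  proof -
    have "x = A *v x" using that by (simp add: matrix_vector_mult_diff_rdistrib)
    then have "x \<bullet> x = 0" using inner_skew_matrix_vector_eq_0[OF assms] by metis
    then show ?thesis by simp
  qed
  then show ?thesis
    using matrix_left_invertible_ker invertible_left_inverse by blast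
qed

lemma matrix_inv_right: "invertible (A::real^'n^'n) \<Longrightarrow> A ** matrix_inv A = mat 1"
  unfolding invertible_def matrix_inv_def by (metis (mono_tags, lifting) someI_ex)

definition cayley :: "real^'n^'n \<Rightarrow> real^'n^'n" where
  "cayley A = (mat 1 + A) ** matrix_inv (mat 1 - A)"

lemma orthogonal_matrix_cayley:
  fixes A :: "real^'n^'n"
  assumes skew: "transpose A = - A"
  shows "orthogonal_matrix (cayley A)"
proof -
  define N where "N = matrix_inv (mat 1 - A)"
  have PN: "(mat 1 - A) ** N = mat 1"
    unfolding N_def by (rule matrix_inv_right[OF invertible_id_minus_skew[OF skew]])
  have tQ: "transpose (mat 1 + A) = mat 1 - A" using skew by (simp add: transpose_add)
  have "transpose (cayley A) ** cayley A = transpose N ** ((mat 1 - A) ** (mat 1 + A)) ** N"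
    by (simp add: cayley_def N_def matrix_transpose_mul tQ matrix_mul_assoc)
  also have "\<dots> = transpose N ** (mat 1 + A) ** ((mat 1 - A) ** N)"
    by (simp add: matrix_ring_simps)
  also have "\<dots> = transpose (transpose (mat 1 + A) ** N)"
    using PN by (simp add: matrix_transpose_mul)
  also have "\<dots> = mat 1" using PN tQ by simp
  finally show ?thesis by (simp add: orthogonal_matrix)
qed

lemma cayley_0: "cayley 0 = mat 1"
  using matrix_inv_right[of "mat 1"] by (simp add: cayley_def invertible_def)

lemma cayley_minus_id:
  fixes A :: "real^'n^'n"
  assumes skew: "transpose A = - A"
  shows "cayley A - mat 1 = A ** (cayley A + mat 1)"
proof -
  define N where "N = matrix_inv (mat 1 - A)"
  have PN: "(mat 1 - A) ** N = mat 1"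
    unfolding N_def by (rule matrix_inv_right[OF invertible_id_minus_skew[OF skew]])
  have R: "cayley A = (mat 1 + A) ** N"
    by (simp add: cayley_def N_def)
  have QP: "(mat 1 + A) - (mat 1 - A) = A ** ((mat 1 + A) + (mat 1 - A))"
  proof -
    have "A ** ((mat 1 + A) + (mat 1 - A)) = A ** (mat 1 + mat 1)"
      by simp
    also have "\<dots> = A + A"
      by (simp only: matrix_add_ldistrib matrix_mul_rid)
    finally show ?thesis by simp
  qed
  have "cayley A - mat 1 = (mat 1 + A) ** N - (mat 1 - A) ** N"
    by (simp only: R PN)
  also have "\<dots> = ((mat 1 + A) - (mat 1 - A)) ** N"
    by (rule matrix_diff_rdistrib[symmetric])
  also have "\<dots> = A ** ((mat 1 + A) + (mat 1 - A)) ** N"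
    by (simp only: QP)
  also have "\<dots> = A ** ((mat 1 + A) ** N + (mat 1 - A) ** N)"
    by (simp only: matrix_mul_assoc[symmetric] matrix_add_rdistrib[of "mat 1 + A" "mat 1 - A" N])
  also have "\<dots> = A ** (cayley A + mat 1)"
    by (simp only: R PN)
  finally show ?thesis .
qed

lemma orthogonal_curve_with_derivative:
  fixes A :: "real^'n^'n"
  assumes skew: "transpose A = - A"
  obtains R where "\<And>s. orthogonal_matrix (R s)" "R 0 = mat 1" "(R has_vector_derivative A) (at 0)"
proof
  define B where "B = (1/2) *\<^sub>R A"
  define R where "R s = cayley (s *\<^sub>R B)" for s
  define g where "g s = B ** (R s + mat 1)" for s
  have skew_sB: "transpose (s *\<^sub>R B) = - (s *\<^sub>R B)" for s
    using skew by (simp add: B_def transpose_scalar)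
  show orth: "orthogonal_matrix (R s)" for s
    unfolding R_def by (rule orthogonal_matrix_cayley[OF skew_sB])
  show R0: "R 0 = mat 1"
    by (simp add: R_def cayley_0)
  (* The difference quotient of R at 0 is g, which tends to 2 B = A since R is bounded. *)
  have quotient: "R s - R 0 = (s - 0) *\<^sub>R g s" for s
    using cayley_minus_id[OF skew_sB, of s] R0 by (simp add: R_def g_def scalar_matrix_assoc)
  obtain K where K: "\<And>a b. norm ((a::real^'n^'n) ** (b::real^'n^'n)) \<le> norm a * norm b * K" "K > 0"
    using bounded_bilinear.pos_bounded[OF bounded_bilinear_matrix_mult] by blast
  define C where "C = norm B * (2 * norm (mat 1 :: real^'n^'n)) * K"
  have g_bound: "norm (g s) \<le> C" for s
  proof -
    have "norm (R s + mat 1) \<le> 2 * norm (mat 1 :: real^'n^'n)"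
      using norm_triangle_ineq[of "R s" "mat 1"] norm_orthogonal_matrix[OF orth] by simp
    then have "norm B * norm (R s + mat 1) * K \<le> C"
      unfolding C_def using K(2) by (intro mult_right_mono mult_left_mono) auto
    then show ?thesis
      unfolding g_def using K(1) order_trans by blast
  qed
  have "((\<lambda>s. R s - mat 1) \<longlongrightarrow> 0) (at 0)"
  proof (rule Lim_null_comparison)
    show "\<forall>\<^sub>F s in at 0. norm (R s - mat 1) \<le> \<bar>s\<bar> * C"
      using quotient R0 g_bound by (intro always_eventually allI) (simp add: mult_left_mono)
    show "((\<lambda>s. \<bar>s\<bar> * C) \<longlongrightarrow> 0) (at 0)"
      by (auto intro!: tendsto_eq_intros)
  qed
  then have "(R \<longlongrightarrow> mat 1) (at 0)"
    by (simp only: LIM_zero_iff)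
  then have "(g \<longlongrightarrow> B ** (mat 1 + mat 1)) (at 0)"
    unfolding g_def by (intro bounded_bilinear.tendsto[OF bounded_bilinear_matrix_mult] tendsto_const tendsto_add)
  moreover have "B ** (mat 1 + mat 1) = A"
    by (simp only: B_def matrix_add_ldistrib matrix_mul_rid scaleR_left_distrib[symmetric]) simp
  ultimately show "(R has_vector_derivative A) (at 0)"
    using has_vector_derivative_at_if_quotient_tendsto[OF quotient] by simp
qed

lemma orthogonal_curve_derivative_skew:
  fixes V :: "real \<Rightarrow> real^'n^'n"
  assumes orth: "\<And>s. orthogonal_matrix (V s)" and deriv: "(V has_vector_derivative V') (at t)"
  shows "transpose (transpose (V t) ** V') = - (transpose (V t) ** V')"
proof -
  have "((\<lambda>s. transpose (V s)) has_vector_derivative transpose V') (at t)"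
    by (rule bounded_linear.has_vector_derivative[OF bounded_linear_transpose deriv])
  then have "((\<lambda>s. transpose (V s) ** V s) has_vector_derivative
      transpose (V t) ** V' + transpose V' ** V t) (at t)"
    by (rule bounded_bilinear.has_vector_derivative[OF bounded_bilinear_matrix_mult _ deriv])
  moreover have "(\<lambda>s. transpose (V s) ** V s) = (\<lambda>s. mat 1)"
    using orth by (simp add: orthogonal_matrix)
  ultimately have "transpose (V t) ** V' + transpose V' ** V t = 0"
    by (metis vector_derivative_unique_at has_vector_derivative_const)
  then show ?thesis
    by (simp add: matrix_transpose_mul eq_neg_iff_add_eq_0 add.commute)
qed

section \<open>Sign matrices and blocks\<close>

lemma Jmat_mult_component:
  "(Jmat d ns k ** A) $ i $ j = (if blk d ns i = k then 1 else -1) * A $ i $ j"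
proof -
  have "(Jmat d ns k ** A) $ i $ j
      = (\<Sum>l\<in>UNIV. if l = i then (if blk d ns i = k then 1 else -1) * A $ i $ j else 0)"
    unfolding matrix_matrix_mult_def Jmat_def vec_lambda_beta by (rule sum.cong) auto
  then show ?thesis by simp
qed

lemma mult_Jmat_component:
  "(A ** Jmat d ns k) $ i $ j = A $ i $ j * (if blk d ns j = k then 1 else -1)"
proof -
  have "(A ** Jmat d ns k) $ i $ j
      = (\<Sum>l\<in>UNIV. if l = j then A $ i $ j * (if blk d ns j = k then 1 else -1) else 0)"
    unfolding matrix_matrix_mult_def Jmat_def vec_lambda_beta by (rule sum.cong) auto
  then show ?thesis by simp
qed

lemma Jmat_mult_Jmat: "Jmat d ns k ** Jmat d ns k = mat 1"
  by (simp add: vec_eq_iff Jmat_mult_component) (simp add: Jmat_def mat_def)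

lemma transpose_Jmat: "transpose (Jmat d ns k) = Jmat d ns k"
  by (simp add: vec_eq_iff transpose_def Jmat_def)

lemma blk_in_range: "blk d ns i \<in> {1..d+1}"
proof -
  have "card {k \<in> {1..d}. ns k \<le> pos i} \<le> card {1..d}"
    by (rule card_mono) auto
  then show ?thesis unfolding blk_def by simp
qed

lemma blockpart_diff: "blockpart d ns (A - B) p q = blockpart d ns A p q - blockpart d ns B p q"
  by (simp add: vec_eq_iff blockpart_def)

lemma transpose_blockpart: "transpose (blockpart d ns A p q) = blockpart d ns (transpose A) q p"
  by (simp add: vec_eq_iff transpose_def blockpart_def)

lemma sum_blockpart_mult:
  fixes A B :: "real^('n::{finite,linorder})^('n::{finite,linorder})"
  shows "(\<Sum>s\<in>{1..d+1}. blockpart d ns A p s ** blockpart d ns B s q) = blockpart d ns (A ** B) p q"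
proof -
  have "(\<Sum>s\<in>{1..d+1}. \<Sum>l\<in>UNIV. (if blk d ns i = p \<and> blk d ns l = s then A$i$l else 0) *
                                   (if blk d ns l = s \<and> blk d ns j = q then B$l$j else 0))
      = (if blk d ns i = p \<and> blk d ns j = q then (\<Sum>l\<in>UNIV. A$i$l * B$l$j) else 0)" for i j
  proof -
    have "(if blk d ns i = p \<and> blk d ns l = s then A$i$l else 0) *
          (if blk d ns l = s \<and> blk d ns j = q then B$l$j else 0)
        = (if s = blk d ns l then (if blk d ns i = p \<and> blk d ns j = q then A$i$l * B$l$j else 0) else 0)"
      for l s by auto
    then have block_sum: "(\<Sum>s\<in>{1..d+1}. (if blk d ns i = p \<and> blk d ns l = s then A$i$l else 0) *
                                (if blk d ns l = s \<and> blk d ns j = q then B$l$j else 0))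
        = (if blk d ns i = p \<and> blk d ns j = q then A$i$l * B$l$j else 0)" for l
      using blk_in_range[of d ns l] by simp
    show ?thesis
      by (subst sum.swap) (simp only: block_sum, auto)
  qed
  then show ?thesis
    by (simp add: vec_eq_iff matrix_matrix_mult_def blockpart_def)
qed

lemma sum_blockpart_row_component:
  "(\<Sum>q\<in>{1..d+1}-{k}. blockpart d ns A k q) $ i $ j
     = (if blk d ns i = k \<and> blk d ns j \<noteq> k then A $ i $ j else 0)"
proof -
  have "(\<Sum>q\<in>{1..d+1}-{k}. blockpart d ns A k q) $ i $ j
      = (\<Sum>q\<in>{1..d+1}-{k}. if q = blk d ns j then (if blk d ns i = k then A $ i $ j else 0) else 0)"
    by (auto simp: blockpart_def intro!: sum.cong)
  then show ?thesis using blk_in_range[of d ns j] by auto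
qed

lemma sum_blockpart_column_component:
  "(\<Sum>p\<in>{1..d+1}-{k}. blockpart d ns A p k) $ i $ j
     = (if blk d ns i \<noteq> k \<and> blk d ns j = k then A $ i $ j else 0)"
proof -
  have "(\<Sum>p\<in>{1..d+1}-{k}. blockpart d ns A p k) $ i $ j
      = (\<Sum>p\<in>{1..d+1}-{k}. if p = blk d ns i then (if blk d ns j = k then A $ i $ j else 0) else 0)"
    by (auto simp: blockpart_def intro!: sum.cong)
  then show ?thesis using blk_in_range[of d ns i] by auto
qed

lemma Wmat_component:
  fixes X L :: "real^('n::{finite,linorder})^('n::{finite,linorder})"
  assumes "transpose X = - X" "transpose L = - L"
  shows "Wmat d ns X L k $ i $ j =
     (if blk d ns i = k \<and> blk d ns j \<noteq> k then (X ** L - L ** X) $ i $ j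
      else if blk d ns i \<noteq> k \<and> blk d ns j = k then (L ** X - X ** L) $ i $ j else 0)"
proof -
  have LX: "transpose L ** transpose X = L ** X"
    using assms by (simp add: matrix_uminus_mult matrix_mult_uminus)
  have row: "(\<Sum>s\<in>{1..d+1}. blockpart d ns X k s ** blockpart d ns L s q
        - transpose (blockpart d ns L s k) ** transpose (blockpart d ns X q s))
       = blockpart d ns (X ** L - L ** X) k q" for q
    by (simp only: sum_subtractf transpose_blockpart sum_blockpart_mult blockpart_diff LX)
  have column: "(\<Sum>s\<in>{1..d+1}. transpose (blockpart d ns L s p) ** transpose (blockpart d ns X k s)
        - blockpart d ns X p s ** blockpart d ns L s k)
       = blockpart d ns (L ** X - X ** L) p k" for p
    by (simp only: sum_subtractf transpose_blockpart sum_blockpart_mult blockpart_diff LX)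
  show ?thesis
    unfolding Wmat_def row column vector_add_component
      sum_blockpart_row_component sum_blockpart_column_component
    by auto
qed

lemma Wmat_eq_commutator:
  fixes X L :: "real^('n::{finite,linorder})^('n::{finite,linorder})"
  assumes "transpose X = - X" "transpose L = - L"
  shows "Wmat d ns X L k = (1/2) *\<^sub>R (L ** X - X ** L) ** Jmat d ns k
                           - Jmat d ns k ** ((1/2) *\<^sub>R (L ** X - X ** L))"
  by (simp add: vec_eq_iff Wmat_component[OF assms] Jmat_mult_component mult_Jmat_component
      algebra_simps)

section \<open>Tangent space of the flag manifold\<close>

definition conj_tuple :: "nat \<Rightarrow> real^'n^'n \<Rightarrow> (nat \<Rightarrow> real^'n^'n) \<Rightarrow> nat \<Rightarrow> real^'n^'n" where
  "conj_tuple d V F = (\<lambda>k. if k \<in> {1..d} then V ** F k ** transpose V else 0)"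

lemma orthogonal_conjugate_mult:
  assumes "orthogonal_matrix (V::real^'n^'n)"
  shows "V ** A ** transpose V ** (V ** B ** transpose V) = V ** (A ** B) ** transpose V"
proof -
  have "V ** A ** transpose V ** (V ** B ** transpose V) = V ** A ** (transpose V ** V) ** B ** transpose V"
    by (simp add: matrix_mul_assoc)
  then show ?thesis
    using assms by (simp add: orthogonal_matrix) (simp add: matrix_mul_assoc)
qed

lemma conj_tuple_Jmat_in_flag:
  "orthogonal_matrix V \<Longrightarrow> conj_tuple d V (Jmat d ns) \<in> flag d ns"
  unfolding flag_def conj_tuple_def by blast

lemma flag_component_mult_self:
  assumes "F \<in> flag d ns" "k \<in> {1..d}"
  shows "F k ** F k = mat 1"
proof -
  obtain V where V: "orthogonal_matrix V" "F = conj_tuple d V (Jmat d ns)"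
    using assms(1) unfolding flag_def conj_tuple_def by blast
  then show ?thesis
    using assms(2) orthogonal_matrix_transpose[of V]
    by (simp add: conj_tuple_def orthogonal_conjugate_mult Jmat_mult_Jmat orthogonal_matrix_def)
qed

lemma flag_component_outside: "F \<in> flag d ns \<Longrightarrow> k \<notin> {1..d} \<Longrightarrow> F k = 0"
  unfolding flag_def by auto

lemma tangent_space_flag_outside:
  assumes "T \<in> tangent_space (flag d ns) c" "k \<notin> {1..d}"
  shows "T k = 0"
proof -
  obtain \<gamma> where \<gamma>: "\<forall>t. \<gamma> t \<in> flag d ns" "((\<lambda>t. \<gamma> t k) has_vector_derivative T k) (at 0)"
    using assms(1) unfolding tangent_space_def by blast
  have "(\<lambda>t. \<gamma> t k) = (\<lambda>t. 0)"
    using \<gamma>(1) assms(2) flag_component_outside by blast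
  then show ?thesis
    using \<gamma>(2) vector_derivative_unique_at has_vector_derivative_const by metis
qed

lemma tangent_space_flag_anticommute:
  assumes "T \<in> tangent_space (flag d ns) c" "k \<in> {1..d}"
  shows "c k ** T k = - (T k ** c k)"
proof -
  obtain \<gamma> where \<gamma>: "\<forall>t. \<gamma> t \<in> flag d ns" "\<gamma> 0 = c"
      "((\<lambda>t. \<gamma> t k) has_vector_derivative T k) (at 0)"
    using assms(1) unfolding tangent_space_def by blast
  have "((\<lambda>t. \<gamma> t k ** \<gamma> t k) has_vector_derivative c k ** T k + T k ** c k) (at 0)"
    using bounded_bilinear.has_vector_derivative[OF bounded_bilinear_matrix_mult \<gamma>(3) \<gamma>(3)] \<gamma>(2)
    by simp
  moreover have "(\<lambda>t. \<gamma> t k ** \<gamma> t k) = (\<lambda>t. mat 1)"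
    using \<gamma>(1) assms(2) flag_component_mult_self by blast
  ultimately have "c k ** T k + T k ** c k = 0"
    by (metis vector_derivative_unique_at has_vector_derivative_const)
  then show ?thesis
    by (simp add: eq_neg_iff_add_eq_0)
qed

lemma commutator_in_tangent_space_flag:
  fixes V \<Omega> :: "real^('n::{finite,linorder})^('n::{finite,linorder})"
  assumes V: "orthogonal_matrix V" and skew: "transpose \<Omega> = - \<Omega>"
  shows "conj_tuple d V (\<lambda>k. \<Omega> ** Jmat d ns k - Jmat d ns k ** \<Omega>)
           \<in> tangent_space (flag d ns) (conj_tuple d V (Jmat d ns))"
proof -
  obtain R where R: "\<And>s. orthogonal_matrix (R s)" "R 0 = mat 1" "(R has_vector_derivative \<Omega>) (at 0)"
    using orthogonal_curve_with_derivative[OF skew] by blast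
  define \<gamma> where "\<gamma> s = conj_tuple d (V ** R s) (Jmat d ns)" for s
  have dU: "((\<lambda>s. V ** R s) has_vector_derivative V ** \<Omega>) (at 0)"
    using bounded_bilinear.has_vector_derivative[OF bounded_bilinear_matrix_mult
        has_vector_derivative_const R(3), of V] by simp
  have "V ** R 0 ** Jmat d ns k ** transpose (V ** \<Omega>) + V ** \<Omega> ** Jmat d ns k ** transpose (V ** R 0)
      = V ** (\<Omega> ** Jmat d ns k - Jmat d ns k ** \<Omega>) ** transpose V" for k
    using R(2) skew by (simp add: matrix_ring_simps)
  then have d_conj: "((\<lambda>s. V ** R s ** Jmat d ns k ** transpose (V ** R s)) has_vector_derivative
      V ** (\<Omega> ** Jmat d ns k - Jmat d ns k ** \<Omega>) ** transpose V) (at 0)" for k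
    using has_vector_derivative_congruence[OF dU, of "Jmat d ns k"] by simp
  have "((\<lambda>s. \<gamma> s k) has_vector_derivative
      conj_tuple d V (\<lambda>k. \<Omega> ** Jmat d ns k - Jmat d ns k ** \<Omega>) k) (at 0)" for k
  proof (cases "k \<in> {1..d}")
    case True
    show ?thesis
      unfolding \<gamma>_def conj_tuple_def if_P[OF True] by (rule d_conj)
  next
    case False
    then show ?thesis
      unfolding \<gamma>_def conj_tuple_def if_not_P[OF False] by simp
  qed
  moreover have "\<gamma> s \<in> flag d ns" for s
    unfolding \<gamma>_def by (intro conj_tuple_Jmat_in_flag orthogonal_matrix_mul V R(1))
  moreover have "\<gamma> 0 = conj_tuple d V (Jmat d ns)"
    by (simp add: \<gamma>_def R(2))
  ultimately show ?thesis
    unfolding tangent_space_def by blast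
qed

lemma orth_proj_eqI:
  assumes p: "p \<in> S" "\<forall>s\<in>S. tinner d (\<lambda>k. x k - p k) s = 0"
    and support: "\<forall>s\<in>S. \<forall>k. k \<notin> {1..d} \<longrightarrow> s k = 0"
  shows "orth_proj d S x = p"
  unfolding orth_proj_def
proof (rule the_equality)
  show "p \<in> S \<and> (\<forall>s\<in>S. tinner d (\<lambda>k. x k - p k) s = 0)"
    using p by blast
next
  fix q assume q: "q \<in> S \<and> (\<forall>s\<in>S. tinner d (\<lambda>k. x k - q k) s = 0)"
  have "tinner d (\<lambda>k. p k - q k) (\<lambda>k. p k - q k)
      = tinner d (\<lambda>k. x k - q k) p - tinner d (\<lambda>k. x k - p k) p
        - tinner d (\<lambda>k. x k - q k) q + tinner d (\<lambda>k. x k - p k) q"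
    unfolding tinner_def sum_subtractf[symmetric] sum.distrib[symmetric]
    by (intro sum.cong refl) (simp add: inner_diff_left inner_diff_right inner_commute)
  also have "\<dots> = 0"
    using p q by simp
  finally have "(\<Sum>k\<in>{1..d}. (norm (p k - q k))\<^sup>2) = 0"
    by (simp add: tinner_def power2_norm_eq_inner)
  then have "p k = q k" if "k \<in> {1..d}" for k
    using that by (simp add: sum_nonneg_eq_0_iff)
  moreover have "p k = q k" if "k \<notin> {1..d}" for k
  proof -
    have "p k = 0 \<and> q k = 0"
      using support p(1) q that by blast
    then show ?thesis by simp
  qed
  ultimately show "q = p"
    by (metis ext)
qed

lemma orth_proj_flag_tangent_space:
  fixes V \<Omega> :: "real^('n::{finite,linorder})^('n::{finite,linorder})"
    and Y :: "nat \<Rightarrow> real^('n::{finite,linorder})^('n::{finite,linorder})"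
  assumes V: "orthogonal_matrix V" and skew: "transpose \<Omega> = - \<Omega>"
    and Y: "\<And>k. k \<in> {1..d} \<Longrightarrow> Y k ** Jmat d ns k = Jmat d ns k ** Y k"
  shows "orth_proj d (tangent_space (flag d ns) (conj_tuple d V (Jmat d ns)))
           (conj_tuple d V (\<lambda>k. Y k + (\<Omega> ** Jmat d ns k - Jmat d ns k ** \<Omega>)))
         = conj_tuple d V (\<lambda>k. \<Omega> ** Jmat d ns k - Jmat d ns k ** \<Omega>)"
    (is "orth_proj d ?S ?x = ?p")
proof (rule orth_proj_eqI)
  let ?c = "conj_tuple d V (Jmat d ns)"
  show "?p \<in> ?S"
    by (rule commutator_in_tangent_space_flag[OF V skew])
  show "\<forall>T\<in>?S. \<forall>k. k \<notin> {1..d} \<longrightarrow> T k = 0"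
    using tangent_space_flag_outside by blast
  show "\<forall>T\<in>?S. tinner d (\<lambda>k. ?x k - ?p k) T = 0"
  proof
    fix T assume T: "T \<in> ?S"
    have "inner (?x k - ?p k) (T k) = 0" if k: "k \<in> {1..d}" for k
    proof (rule inner_commuting_anticommuting_eq_0)
      have diff: "?x k - ?p k = V ** Y k ** transpose V"
        using k by (simp add: conj_tuple_def matrix_add_ldistrib matrix_add_rdistrib)
      have ck: "?c k = V ** Jmat d ns k ** transpose V"
        using k by (simp add: conj_tuple_def)
      show "(?x k - ?p k) ** ?c k = ?c k ** (?x k - ?p k)"
        unfolding diff ck orthogonal_conjugate_mult[OF V] Y[OF k] ..
      show "?c k ** T k = - (T k ** ?c k)"
        by (rule tangent_space_flag_anticommute[OF T k])
      show "?c k ** ?c k = mat 1"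
        by (rule flag_component_mult_self[OF conj_tuple_Jmat_in_flag[OF V] k])
      show "transpose (?c k) = ?c k"
        unfolding ck by (simp add: matrix_transpose_mul transpose_Jmat matrix_mul_assoc)
    qed
    then show "tinner d (\<lambda>k. ?x k - ?p k) T = 0"
      by (simp add: tinner_def)
  qed
qed

theorem lemmaA1:
  fixes d :: nat and ns :: "nat \<Rightarrow> nat"
    and V X :: "real \<Rightarrow> real^('n::{finite,linorder})^('n::{finite,linorder})"
    and \<Lambda> :: "real \<Rightarrow> real^('n::{finite,linorder})^('n::{finite,linorder})"
    and c T2 :: "real \<Rightarrow> nat \<Rightarrow> real^('n::{finite,linorder})^('n::{finite,linorder})"
  assumes d1: "1 \<le> d"
    and ns_pos: "0 < ns 1"
    and ns_mono: "\<forall>k\<in>{1..<d}. ns k < ns (k+1)"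
    and ns_lt: "ns d < CARD('n)"
    and V_orth: "\<forall>t. orthogonal_matrix (V t)"
    and V_diff: "\<forall>t. V differentiable (at t)"
    and Lambda_def: "\<forall>t. \<Lambda> t = transpose (V t) ** vector_derivative V (at t)"
    and Lambda_diag: "\<forall>t. \<forall>k\<in>{1..d+1}. blockpart d ns (\<Lambda> t) k k = 0"
    and c_def: "\<forall>t. c t = (\<lambda>k. if k \<in> {1..d} then V t ** Jmat d ns k ** transpose (V t) else 0)"
    and X_skew: "\<forall>t. transpose (X t) = - X t"
    and X_diff: "\<forall>t. X differentiable (at t)"
    and X_diag: "\<forall>t. \<forall>k\<in>{1..d+1}. blockpart d ns (X t) k k = 0"
    and T2_def: "\<forall>t. T2 t = (\<lambda>k. if k \<in> {1..d} then
        V t ** (\<Lambda> t ** X t ** Jmat d ns k + Jmat d ns k ** X t ** \<Lambda> t) ** transpose (V t) else 0)"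
  shows "\<forall>t. orth_proj d (tangent_space (flag d ns) (c t)) (T2 t)
              = (\<lambda>k. if k \<in> {1..d} then V t ** Wmat d ns (X t) (\<Lambda> t) k ** transpose (V t) else 0)
          \<and> (\<forall>k\<in>{1..d}. transpose (Wmat d ns (X t) (\<Lambda> t) k) = Wmat d ns (X t) (\<Lambda> t) k)"
proof (intro allI conjI ballI)
  fix t
  let ?J = "Jmat d ns" and ?S = "\<Lambda> t ** X t + X t ** \<Lambda> t"
  define \<Omega> where "\<Omega> = (1/2) *\<^sub>R (\<Lambda> t ** X t - X t ** \<Lambda> t)"
  define Y where "Y k = (1/2) *\<^sub>R (?J k ** ?S + ?S ** ?J k)" for k
  have "(V has_vector_derivative vector_derivative V (at t)) (at t)"
    using V_diff vector_derivative_works by blast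
  then have \<Lambda>_skew: "transpose (\<Lambda> t) = - \<Lambda> t"
    using orthogonal_curve_derivative_skew V_orth Lambda_def by metis
  have \<Omega>_skew: "transpose \<Omega> = - \<Omega>"
    using \<Lambda>_skew X_skew by (simp add: \<Omega>_def matrix_ring_simps) (simp add: algebra_simps)
  have W: "Wmat d ns (X t) (\<Lambda> t) k = \<Omega> ** ?J k - ?J k ** \<Omega>" for k
    unfolding \<Omega>_def by (rule Wmat_eq_commutator[OF X_skew[rule_format] \<Lambda>_skew])
  have Y_commute: "Y k ** ?J k = ?J k ** Y k" for k
    using anticommutator_commute[OF Jmat_mult_Jmat, where S = ?S]
    by (simp add: Y_def matrix_scalar_ac scalar_matrix_assoc[symmetric])
  have T2_split: "\<Lambda> t ** X t ** ?J k + ?J k ** X t ** \<Lambda> t = Y k + (\<Omega> ** ?J k - ?J k ** \<Omega>)" for k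
    unfolding Y_def \<Omega>_def
    using anticommutator_commutator_split[of "\<Lambda> t ** X t" "?J k" "X t ** \<Lambda> t"]
    by (simp only: matrix_mul_assoc)
  have T2: "T2 t = conj_tuple d (V t) (\<lambda>k. Y k + (\<Omega> ** ?J k - ?J k ** \<Omega>))"
    unfolding conj_tuple_def T2_def[rule_format] T2_split ..
  have c: "c t = conj_tuple d (V t) ?J"
    unfolding conj_tuple_def c_def[rule_format] ..
  have "orth_proj d (tangent_space (flag d ns) (c t)) (T2 t)
      = conj_tuple d (V t) (\<lambda>k. \<Omega> ** ?J k - ?J k ** \<Omega>)"
    unfolding T2 c by (rule orth_proj_flag_tangent_space[OF V_orth[rule_format] \<Omega>_skew Y_commute])
  then show "orth_proj d (tangent_space (flag d ns) (c t)) (T2 t)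
      = (\<lambda>k. if k \<in> {1..d} then V t ** Wmat d ns (X t) (\<Lambda> t) k ** transpose (V t) else 0)"
    unfolding W by (simp add: conj_tuple_def)
  show "transpose (Wmat d ns (X t) (\<Lambda> t) k) = Wmat d ns (X t) (\<Lambda> t) k" for k
    unfolding W by (rule transpose_commutator_skew_symmetric[OF \<Omega>_skew transpose_Jmat])
qed

end
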